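(* Let $u,v$ be positive real numbers. Then $$\sum_{\substack{j\in\mathbb{Z}\\ \frac12-v\le j\le u-\frac12}}\frac{1}{\sqrt{(u-j)(v+j)}}\le 12.$$ *)

theory Defs
  imports Complex_Main
begin

end

theory Submission
  imports Defs
begin

text \<open>
  Since \<open>\<surd>x + \<surd>y \<ge> \<surd>(x + y)\<close>, each term is at most
  \<open>(1/\<surd>(u - j) + 1/\<surd>(v + j)) / \<surd>(u + v)\<close>. Each of the two resulting sums is a
  Riemann-type sum of \<open>1/\<surd>t\<close> over unit-spaced points at least \<open>1/2\<close>, and the midpoint
  estimate \<open>1/\<surd>y \<le> 2 (\<surd>(y + 1/2) - \<surd>(y - 1/2))\<close> telescopes it to at most
  \<open>2 \<surd>(u + v)\<close>. Hence the whole sum is at most \<open>4\<close>.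
\<close>

lemma inverse_sqrt_le_sqrt_diff:
  fixes y :: real
  assumes "y \<ge> 1/2"
  shows "1 / sqrt y \<le> 2 * (sqrt (y + 1/2) - sqrt (y - 1/2))"
proof -
  define p q where "p = sqrt (y + 1/2)" and "q = sqrt (y - 1/2)"
  have p2: "p\<^sup>2 = y + 1/2" and q2: "q\<^sup>2 = y - 1/2" and "p > 0" "q \<ge> 0"
    using assms by (simp_all add: p_def q_def)
  have "(p + q)\<^sup>2 \<le> 2 * (p\<^sup>2 + q\<^sup>2)"
    using zero_le_power2[of "p - q"] by (simp add: power2_eq_square algebra_simps)
  also have "\<dots> = (2 * sqrt y)\<^sup>2"
    using assms by (simp add: p2 q2 power_mult_distrib)
  finally have "(p + q)\<^sup>2 \<le> (2 * sqrt y)\<^sup>2" .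
  then have sum_le: "p + q \<le> 2 * sqrt y"
    by (rule power2_le_imp_le) (use assms in simp)
  have "(p - q) * (p + q) = 1"
    using p2 q2 by (simp add: power2_eq_square algebra_simps)
  then have diff: "p - q = 1 / (p + q)"
    using \<open>p > 0\<close> \<open>q \<ge> 0\<close> by (simp add: eq_divide_eq)
  have "1 / sqrt y = 2 / (2 * sqrt y)"
    by simp
  also have "\<dots> \<le> 2 / (p + q)"
    using sum_le \<open>p > 0\<close> \<open>q \<ge> 0\<close> assms by (intro divide_left_mono mult_pos_pos) simp_all
  also have "\<dots> = 2 * (p - q)"
    by (simp add: diff)
  finally show ?thesis
    by (simp add: p_def q_def)
qed

lemma sum_inverse_sqrt_le:
  fixes c :: real and a b :: int
  assumes "c + a \<ge> 1/2" and "a - 1 \<le> b"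
  shows "(\<Sum>j\<in>{a..b}. 1 / sqrt (c + j)) \<le> 2 * sqrt (c + b + 1/2)"
  using assms(2)
proof (induction b rule: int_ge_induct)
  case base
  then show ?case
    using assms(1) by simp
next
  case (step i)
  have "{a..i + 1} = insert (i + 1) {a..i}"
    using step.hyps by auto
  then have "(\<Sum>j\<in>{a..i + 1}. 1 / sqrt (c + j))
      = 1 / sqrt (c + i + 1) + (\<Sum>j\<in>{a..i}. 1 / sqrt (c + j))"
    by (simp add: add.assoc)
  also have "\<dots> \<le> 2 * (sqrt (c + i + 3/2) - sqrt (c + i + 1/2)) + 2 * sqrt (c + i + 1/2)"
    using inverse_sqrt_le_sqrt_diff[of "c + i + 1"] step assms(1)
    by (intro add_mono) (simp_all add: algebra_simps)
  finally show ?case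
    by (simp add: algebra_simps)
qed

lemma inverse_sqrt_mult_le:
  fixes x y :: real
  assumes "x > 0" "y > 0"
  shows "1 / sqrt (x * y) \<le> (1 / sqrt x + 1 / sqrt y) / sqrt (x + y)"
proof -
  have "sqrt x + sqrt y > 0"
    using assms by (simp add: add_pos_pos)
  then have "1 / sqrt (x * y) = (sqrt x + sqrt y) / (sqrt (x * y) * (sqrt x + sqrt y))"
    by simp
  also have "\<dots> \<le> (sqrt x + sqrt y) / (sqrt (x * y) * sqrt (x + y))"
  proof (rule divide_left_mono)
    show "sqrt (x * y) * sqrt (x + y) \<le> sqrt (x * y) * (sqrt x + sqrt y)"
      using assms sqrt_add_le_add_sqrt[of x y] by (simp add: mult_left_mono)
    show "0 < sqrt (x * y) * (sqrt x + sqrt y) * (sqrt (x * y) * sqrt (x + y))"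
      using assms \<open>sqrt x + sqrt y > 0\<close> by simp
  qed (use \<open>sqrt x + sqrt y > 0\<close> in simp)
  also have "\<dots> = (1 / sqrt x + 1 / sqrt y) / sqrt (x + y)"
    using assms by (simp add: real_sqrt_mult field_simps)
  finally show ?thesis .
qed

lemma sum_inverse_sqrt_diff_le:
  fixes c :: real and a b :: int
  assumes "c - b \<ge> 1/2" and "a - 1 \<le> b"
  shows "(\<Sum>j\<in>{a..b}. 1 / sqrt (c - j)) \<le> 2 * sqrt (c - a + 1/2)"
proof -
  have "(\<Sum>j\<in>{a..b}. 1 / sqrt (c - j)) = (\<Sum>j\<in>{-b..-a}. 1 / sqrt (c + j))"
    using sum.reindex[of uminus "{a..b}" "\<lambda>j. 1 / sqrt (c + j)"] by simp
  also have "\<dots> \<le> 2 * sqrt (c - a + 1/2)"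
    using sum_inverse_sqrt_le[of c "-b" "-a"] assms by simp
  finally show ?thesis .
qed

lemma sum_inverse_sqrt_product_le:
  fixes u v :: real and a b :: int
  assumes ha: "1/2 - v \<le> a" and hb: "b \<le> u - 1/2" and "a \<le> b"
  shows "(\<Sum>j\<in>{a..b}. 1 / sqrt ((u - j) * (v + j))) \<le> 4"
proof -
  have uv: "u + v > 0"
    using assms by linarith
  have "(\<Sum>j\<in>{a..b}. 1 / sqrt (u - j)) \<le> 2 * sqrt (u - a + 1/2)"
    using sum_inverse_sqrt_diff_le[where c = u and a = a and b = b] assms by simp
  also have "\<dots> \<le> 2 * sqrt (u + v)"
    using ha by simp
  finally have left: "(\<Sum>j\<in>{a..b}. 1 / sqrt (u - j)) \<le> 2 * sqrt (u + v)" .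
  have "(\<Sum>j\<in>{a..b}. 1 / sqrt (v + j)) \<le> 2 * sqrt (v + b + 1/2)"
    using sum_inverse_sqrt_le[of v a b] assms by simp
  also have "\<dots> \<le> 2 * sqrt (u + v)"
    using hb by simp
  finally have right: "(\<Sum>j\<in>{a..b}. 1 / sqrt (v + j)) \<le> 2 * sqrt (u + v)" .
  have "(\<Sum>j\<in>{a..b}. 1 / sqrt ((u - j) * (v + j)))
      \<le> (\<Sum>j\<in>{a..b}. (1 / sqrt (u - j) + 1 / sqrt (v + j)) / sqrt (u + v))"
  proof (rule sum_mono)
    fix j assume "j \<in> {a..b}"
    then have "u - j > 0" "v + j > 0"
      using ha hb by auto
    then show "1 / sqrt ((u - j) * (v + j)) \<le> (1 / sqrt (u - j) + 1 / sqrt (v + j)) / sqrt (u + v)"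
      using inverse_sqrt_mult_le[of "u - j" "v + j"] by simp
  qed
  also have "\<dots> = ((\<Sum>j\<in>{a..b}. 1 / sqrt (u - j)) + (\<Sum>j\<in>{a..b}. 1 / sqrt (v + j))) / sqrt (u + v)"
    by (simp only: sum.distrib[symmetric] sum_divide_distrib)
  also have "\<dots> \<le> 4 * sqrt (u + v) / sqrt (u + v)"
    using left right uv by (intro divide_right_mono) auto
  also have "\<dots> = 4"
    using uv by simp
  finally show ?thesis .
qed

theorem lemma6p7:
  fixes u v :: real
  assumes "u > 0" and "v > 0"
  shows "(\<Sum>j\<in>{j::int. 1/2 - v \<le> real_of_int j \<and> real_of_int j \<le> u - 1/2}.
            1 / sqrt ((u - real_of_int j) * (v + real_of_int j))) \<le> 12"
proof -
  define a b where "a = \<lceil>1/2 - v\<rceil>" and "b = \<lfloor>u - 1/2\<rfloor>"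
  have range: "{j::int. 1/2 - v \<le> j \<and> j \<le> u - 1/2} = {a..b}"
    by (auto simp: a_def b_def ceiling_le_iff le_floor_iff)
  show ?thesis
  proof (cases "a \<le> b")
    case True
    then have "(\<Sum>j\<in>{a..b}. 1 / sqrt ((u - j) * (v + j))) \<le> 4"
      by (intro sum_inverse_sqrt_product_le) (simp_all add: a_def b_def)
    then show ?thesis
      unfolding range by linarith
  qed (simp add: range)
qed

end
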